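(* For every integer $P\ge1$ and every integer $k\ge2$, $$\sum_{i\in\{0\}\times\mathbb Z_{\ge0}^{k-1}}\exp\Bigl(-\ln(4)\sum_{j=2}^k\mathbb 1\{i_j>i_{j-1}\}\Bigl\lfloor\frac{i_j-i_{j-1}}{P}\Bigr\rfloor\Bigr)\le c\,(9P)^{k-1},\qquad c:=\mathrm e^{2+1/12}/2,$$ where $i=(i_1,\dots,i_k)$ with $i_1=0$. *)

theory Defs
  imports "HOL-Analysis.Analysis"
begin

end

theory Submission
  imports Defs
begin

(* The weight of a sequence is the product over its steps of a kernel that is 1 for a
   non-increasing step and 4^-floor((b - a)/P) for a step from a up to b.  Against the
   potential g b = 2^floor(b/P) a single step costs at most a factor 6P: the steps down to
   some b <= a contribute a geometric sum of at most 2P g(a), while on the way up the kernel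
   loses a factor 4 per block of length P and the potential gains only 2, giving at most
   4P g(a).  Summing out the last coordinate k - 1 times bounds every finite partial sum by
   (6P)^(k-1) g(0) = (6P)^(k-1), and 6 <= 9, 1 <= c. *)

lemma sum_chains_le:
  fixes K :: "'a \<Rightarrow> 'a \<Rightarrow> real" and g :: "'a \<Rightarrow> real"
  assumes K_nonneg: "\<And>a b. 0 \<le> K a b" and "0 \<le> C"
    and one_step: "\<And>a. (\<Sum>b\<in>B. K a b * g b) \<le> C * g a"
    and "n \<ge> 1"
  shows "(\<Sum>i \<in> PiE {1..n} (\<lambda>j. if j = 1 then {a\<^sub>0} else B).
           (\<Prod>j=2..n. K (i (j - 1)) (i j)) * g (i n)) \<le> C ^ (n - 1) * g a\<^sub>0"
  using \<open>n \<ge> 1\<close>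
proof (induction n rule: dec_induct)
  case base
  have "PiE {1..1::nat} (\<lambda>j. if j = 1 then {a\<^sub>0} else B) = {(\<lambda>_. undefined)(1 := a\<^sub>0)}"
    unfolding atLeastAtMost_singleton PiE_insert_eq PiE_empty_domain by auto
  then show ?case by simp
next
  case (step n)
  define T where "T = (\<lambda>j::nat. if j = 1 then {a\<^sub>0} else B)"
  define W where "W = (\<lambda>i::nat \<Rightarrow> 'a. \<Prod>j=2..n. K (i (j - 1)) (i j))"
  have W_nonneg: "0 \<le> W i" for i
    unfolding W_def by (intro prod_nonneg) (simp add: K_nonneg)
  have W_upd: "(\<Prod>j=2..Suc n. K ((i(Suc n := y)) (j - 1)) ((i(Suc n := y)) j))
      = W i * K (i n) y" for i y
  proof -
    have "(\<Prod>j=2..n. K ((i(Suc n := y)) (j - 1)) ((i(Suc n := y)) j)) = W i"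
      unfolding W_def by (rule prod.cong) auto
    then show ?thesis using step.hyps by simp
  qed
  have T_Suc: "T (Suc n) = B" and dom_Suc: "{1..Suc n} = insert (Suc n) {1..n}"
    using step.hyps by (auto simp: T_def)
  let ?F = "\<lambda>i. (\<Prod>j=2..Suc n. K (i (j - 1)) (i j)) * g (i (Suc n))"
  have "(\<Sum>i \<in> PiE {1..Suc n} T. ?F i)
      = (\<Sum>p \<in> T (Suc n) \<times> PiE {1..n} T. ?F ((\<lambda>(y, i). i(Suc n := y)) p))"
    unfolding dom_Suc PiE_insert_eq
    by (rule sum.reindex[unfolded comp_def]) (rule inj_combinator, simp)
  also have "\<dots> = (\<Sum>(y, i) \<in> T (Suc n) \<times> PiE {1..n} T. W i * K (i n) y * g y)"
    by (rule sum.cong[OF refl]) (simp only: split_paired_all case_prod_conv W_upd fun_upd_same)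
  also have "\<dots> = (\<Sum>i \<in> PiE {1..n} T. W i * (\<Sum>y\<in>B. K (i n) y * g y))"
    by (simp add: T_Suc sum.cartesian_product[symmetric] sum.swap[of _ B]
        sum_distrib_left mult.assoc)
  also have "\<dots> \<le> (\<Sum>i \<in> PiE {1..n} T. W i * (C * g (i n)))"
    by (intro sum_mono mult_left_mono one_step W_nonneg)
  also have "\<dots> = C * (\<Sum>i \<in> PiE {1..n} T. W i * g (i n))"
    by (simp add: sum_distrib_left algebra_simps)
  also have "\<dots> \<le> C * (C ^ (n - 1) * g a\<^sub>0)"
    using step.IH \<open>0 \<le> C\<close> unfolding T_def W_def by (rule mult_left_mono)
  also have "\<dots> = C ^ (Suc n - 1) * g a\<^sub>0"
    using step.hyps by (cases n) auto
  finally show ?case unfolding T_def .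
qed

lemma finite_PiE_subset_bounded:
  fixes F :: "('a \<Rightarrow> nat) set"
  assumes "finite F" and "finite I" and "F \<subseteq> PiE I A"
  obtains N where "F \<subseteq> PiE I (\<lambda>j. A j \<inter> {..N})"
proof
  have "finite (\<Union>f\<in>F. f ` I)"
    using assms by simp
  then show "F \<subseteq> PiE I (\<lambda>j. A j \<inter> {..Max (\<Union>f\<in>F. f ` I)})"
    using assms(3) by (auto simp: PiE_iff intro: Max_ge)
qed

lemma sum_div_blocks:
  fixes G :: "nat \<Rightarrow> 'a::semiring_1"
  shows "(\<Sum>d<M * P. G (d div P)) = of_nat P * (\<Sum>m<M. G m)"
proof -
  have "(\<Sum>d\<in>{m * P..<m * P + P}. G (d div P)) = of_nat P * G m" for m
  proof -
    have "d div P = m" if "d \<in> {m * P..<m * P + P}" for d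
      using that by (intro div_nat_eqI) (auto simp: algebra_simps)
    then show ?thesis by simp
  qed
  then show ?thesis
    by (simp add: sum.nat_group[symmetric] sum_distrib_left)
qed

lemma div_add_le: "(x + y) div P \<le> x div P + y div P + (1::nat)"
proof (cases "P = 0")
  case False
  then have "x mod P + y mod P < 2 * P"
    by (simp add: mult_2 add_strict_mono)
  then have "(x mod P + y mod P) div P < 2"
    by (intro less_mult_imp_div_less) (simp add: mult.commute)
  then show ?thesis using div_add1_eq[of x y P] by linarith
qed simp

lemma sum_half_power_div_le:
  assumes "P \<ge> 1"
  shows "(\<Sum>d<D. (1/2::real) ^ (d div P)) \<le> 2 * real P"
proof -
  have "(\<Sum>d<D. (1/2::real) ^ (d div P)) \<le> (\<Sum>d<D * P. (1/2::real) ^ (d div P))"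
    using assms by (intro sum_mono2) auto
  also have "\<dots> = real P * (\<Sum>m<D. (1/2::real) ^ m)"
    by (rule sum_div_blocks)
  also have "\<dots> \<le> real P * 2"
    by (intro mult_left_mono) (simp_all add: sum_gp_strict)
  finally show ?thesis by simp
qed

lemma sum_two_power_div_le:
  assumes "P \<ge> 1"
  shows "(\<Sum>b\<le>a. (2::real) ^ (b div P)) \<le> 2 * real P * 2 ^ (a div P)"
proof -
  define M where "M = a div P + 1"
  have "a mod P < P"
    using assms by simp
  then have "a < M * P"
    unfolding M_def distrib_right mult_1_left using div_mult_mod_eq[of a P] by linarith
  then have "(\<Sum>b\<le>a. (2::real) ^ (b div P)) \<le> (\<Sum>b<M * P. (2::real) ^ (b div P))"
    by (intro sum_mono2) auto
  also have "\<dots> = real P * (2 ^ M - 1)"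
    by (simp add: sum_div_blocks sum_gp_strict)
  also have "\<dots> \<le> 2 * real P * 2 ^ (a div P)"
    by (simp add: M_def algebra_simps)
  finally show ?thesis .
qed

definition jump_weight :: "nat \<Rightarrow> nat \<Rightarrow> nat \<Rightarrow> real" where
  "jump_weight P a b = (if a < b then (1/4) ^ ((b - a) div P) else 1)"

lemma exp_jump_penalty_eq:
  "exp (- ln 4 * (if b > a then real_of_int \<lfloor>(real b - real a) / real P\<rfloor> else 0))
     = jump_weight P a b"
proof (cases "a < b")
  case True
  then have "real_of_int \<lfloor>(real b - real a) / real P\<rfloor> = real ((b - a) div P)"
    by (simp flip: of_nat_diff add: floor_divide_of_nat_eq)
  moreover have "exp (- ln 4 * real m) = (1/4 :: real) ^ m" for m
    by (subst mult.commute, subst exp_of_nat_mult) (simp add: exp_minus)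
  ultimately show ?thesis using True by (simp add: jump_weight_def)
qed (simp add: jump_weight_def)

lemma jump_weight_nonneg: "0 \<le> jump_weight P a b"
  by (simp add: jump_weight_def)

lemma jump_weight_up_le:
  assumes "a < b"
  shows "jump_weight P a b * 2 ^ (b div P) \<le> 2 * 2 ^ (a div P) * (1/2) ^ ((b - a) div P)"
proof -
  let ?n = "(b - a) div P"
  have "(2::real) ^ (b div P) \<le> 2 ^ (a div P + ?n + 1)"
    using div_add_le[of a "b - a" P] assms by (intro power_increasing) auto
  then have "jump_weight P a b * 2 ^ (b div P) \<le> (1/4) ^ ?n * 2 ^ (a div P + ?n + 1)"
    using assms by (simp add: jump_weight_def)
  also have "\<dots> = 2 * 2 ^ (a div P) * ((1/4) ^ ?n * 2 ^ ?n)"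
    by (simp add: power_add)
  also have "(1/4) ^ ?n * 2 ^ ?n = (1/2 :: real) ^ ?n"
    by (simp flip: power_mult_distrib)
  finally show ?thesis .
qed

lemma sum_jump_weight_le:
  assumes "P \<ge> 1"
  shows "(\<Sum>b\<le>N. jump_weight P a b * 2 ^ (b div P)) \<le> 6 * real P * 2 ^ (a div P)"
proof -
  let ?h = "\<lambda>b. jump_weight P a b * 2 ^ (b div P)"
  let ?u = "\<lambda>d. 2 * 2 ^ (a div P) * (1/2::real) ^ (d div P)"
  have "(\<Sum>b\<in>{..N} \<inter> {..a}. ?h b) = (\<Sum>b\<in>{..N} \<inter> {..a}. 2 ^ (b div P))"
    by (rule sum.cong) (auto simp: jump_weight_def)
  also have "\<dots> \<le> (\<Sum>b\<le>a. 2 ^ (b div P))"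
    by (rule sum_mono2) auto
  also have "\<dots> \<le> 2 * real P * 2 ^ (a div P)"
    using assms by (rule sum_two_power_div_le)
  finally have down: "(\<Sum>b\<in>{..N} \<inter> {..a}. ?h b) \<le> 2 * real P * 2 ^ (a div P)" .
  have "(\<Sum>b\<in>{..N} - {..a}. ?h b) \<le> (\<Sum>b\<in>{..N} - {..a}. ?u (b - a))"
    by (rule sum_mono) (simp add: jump_weight_up_le)
  also have "\<dots> = (\<Sum>d\<in>(\<lambda>b. b - a) ` ({..N} - {..a}). ?u d)"
    by (subst sum.reindex) (auto simp: inj_on_def)
  also have "\<dots> \<le> (\<Sum>d<N + 1. ?u d)"
    by (rule sum_mono2) auto
  also have "\<dots> = 2 * 2 ^ (a div P) * (\<Sum>d<N + 1. (1/2) ^ (d div P))"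
    by (simp only: sum_distrib_left)
  also have "\<dots> \<le> 2 * 2 ^ (a div P) * (2 * real P)"
    using assms by (intro mult_left_mono sum_half_power_div_le) auto
  finally have up: "(\<Sum>b\<in>{..N} - {..a}. ?h b) \<le> 4 * real P * 2 ^ (a div P)"
    by (simp add: algebra_simps)
  show ?thesis
    using down up sum.Int_Diff[of "{..N}" ?h "{..a}"] by simp
qed

lemma sum_jump_chains_le:
  assumes "P \<ge> 1" and "k \<ge> 1" and "finite F"
    and "F \<subseteq> PiE {1..k} (\<lambda>j. if j = 1 then {0} else UNIV)"
  shows "(\<Sum>i\<in>F. \<Prod>j=2..k. jump_weight P (i (j - 1)) (i j)) \<le> (6 * real P) ^ (k - 1)"
proof -
  let ?W = "\<lambda>i. \<Prod>j=2..k. jump_weight P (i (j - 1)) (i j)"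
  have W_nonneg: "0 \<le> ?W i" for i
    by (simp add: prod_nonneg jump_weight_nonneg)
  obtain N where "F \<subseteq> PiE {1..k} (\<lambda>j. (if j = 1 then {0} else UNIV) \<inter> {..N})"
    using finite_PiE_subset_bounded[OF \<open>finite F\<close> finite_atLeastAtMost assms(4)] by blast
  also have "\<dots> = PiE {1..k} (\<lambda>j. if j = 1 then {0} else {..N})" (is "_ = ?B")
    by (rule PiE_cong) auto
  finally have "(\<Sum>i\<in>F. ?W i) \<le> (\<Sum>i\<in>?B. ?W i)"
    using W_nonneg by (intro sum_mono2 finite_PiE) auto
  also have "\<dots> \<le> (\<Sum>i\<in>?B. ?W i * 2 ^ (i k div P))"
    using mult_left_mono[of 1 "2 ^ (_ div P)" "?W _"] W_nonneg by (intro sum_mono) simp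
  also have "\<dots> \<le> (6 * real P) ^ (k - 1) * 2 ^ (0 div P)"
    by (rule sum_chains_le) (use assms in \<open>auto intro: jump_weight_nonneg sum_jump_weight_le\<close>)
  finally show ?thesis by simp
qed

theorem lemma6:
  fixes P k :: nat
  assumes "P \<ge> 1" and "k \<ge> 2"
  defines "S \<equiv> PiE {1..k} (\<lambda>j. if j = 1 then {0::nat} else UNIV)"
    and "w \<equiv> (\<lambda>i::nat \<Rightarrow> nat. exp (- ln 4 * (\<Sum>j=2..k.
            (if i j > i (j - 1)
             then real_of_int \<lfloor>(real (i j) - real (i (j - 1))) / real P\<rfloor> else 0))))"
    and "c \<equiv> exp (2 + 1/12) / 2"
  shows "w summable_on S \<and> infsum w S \<le> c * (9 * real P) ^ (k - 1)"
proof -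
  have w_eq: "w = (\<lambda>i. \<Prod>j=2..k. jump_weight P (i (j - 1)) (i j))"
    unfolding w_def by (simp only: sum_distrib_left exp_sum[OF finite_atLeastAtMost]
        exp_jump_penalty_eq)
  have partial_sums: "sum w F \<le> (9 * real P) ^ (k - 1)" if "finite F" and "F \<subseteq> S" for F
  proof -
    have "sum w F \<le> (6 * real P) ^ (k - 1)"
      unfolding w_eq using assms(1,2) that unfolding S_def by (intro sum_jump_chains_le) auto
    also have "\<dots> \<le> (9 * real P) ^ (k - 1)"
      by (intro power_mono) auto
    finally show ?thesis .
  qed
  have summable: "w summable_on S"
    using partial_sums
    by (intro nonneg_bdd_above_summable_on bdd_aboveI[where M = "(9 * real P) ^ (k - 1)"])
      (auto simp: w_def)
  have "1 \<le> c"
    using exp_ge_add_one_self[of "2 + 1/12 :: real"] unfolding c_def by simp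
  then have "(9 * real P) ^ (k - 1) \<le> c * (9 * real P) ^ (k - 1)"
    using mult_right_mono[of 1 c "(9 * real P) ^ (k - 1)"] by simp
  then show ?thesis
    using summable order_trans[OF infsum_le_finite_sums[OF summable partial_sums]] by blast
qed

end
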